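(* Let $\mathcal{S}$ be a set of Turing degrees and let $\mathbb{R}_{\mathcal{S}}$ be the set of reals whose Turing degree lies in $\mathcal{S}$. Then $\mathbb{R}_{\mathcal{S}}$ is a subfield of $\mathbb{R}$ if and only if $\mathcal{S}$ is a nonempty ideal, i.e. $\mathcal{S}$ is nonempty, closed under finite joins $\oplus$, and closed downward under $\le_T$.
   Context: Turing reducibility between reals is the usual one; $\oplus$ denotes the Turing join. *)

theory Defs
  imports Complex_Main "HOL-Library.Nat_Bijection"
begin

text \<open>Codes for unary partial recursive functions with an extra input function, in the style of
  Kleene's mu-recursive functions, using Cantor pairing on nat.\<close>

datatype rcode =
    CZero | CSucc | CLeft | CRight | COracle
  | CPair rcode rcode | CComp rcode rcode | CPrec rcode rcode | CRfind rcode

inductive eval :: "(nat \<Rightarrow> nat) \<Rightarrow> rcode \<Rightarrow> nat \<Rightarrow> nat \<Rightarrow> bool" for or where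
  zero: "eval or CZero n 0"
| succ: "eval or CSucc n (Suc n)"
| left: "eval or CLeft n (fst (prod_decode n))"
| right: "eval or CRight n (snd (prod_decode n))"
| query: "eval or COracle n (or n)"
| pair: "eval or c n a \<Longrightarrow> eval or d n b \<Longrightarrow> eval or (CPair c d) n (prod_encode (a, b))"
| comp: "eval or d n a \<Longrightarrow> eval or c a b \<Longrightarrow> eval or (CComp c d) n b"
| prec0: "eval or f a r \<Longrightarrow> eval or (CPrec f h) (prod_encode (a, 0)) r"
| precS: "eval or (CPrec f h) (prod_encode (a, k)) r \<Longrightarrow>
          eval or h (prod_encode (a, prod_encode (k, r))) s \<Longrightarrow>
          eval or (CPrec f h) (prod_encode (a, Suc k)) s"
| rfind: "eval or f (prod_encode (a, k)) 0 \<Longrightarrow>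
          (\<forall>i<k. \<exists>v. v \<noteq> 0 \<and> eval or f (prod_encode (a, i)) v) \<Longrightarrow>
          eval or (CRfind f) a k"

definition chi :: "nat set \<Rightarrow> nat \<Rightarrow> nat" where
  "chi A n = (if n \<in> A then 1 else 0)"

definition turing_le :: "nat set \<Rightarrow> nat set \<Rightarrow> bool" (infix "\<le>\<^sub>T" 50) where
  "A \<le>\<^sub>T B \<longleftrightarrow> (\<exists>c. \<forall>n. eval (chi B) c n (chi A n))"

definition turing_eq :: "nat set \<Rightarrow> nat set \<Rightarrow> bool" where
  "turing_eq A B \<longleftrightarrow> A \<le>\<^sub>T B \<and> B \<le>\<^sub>T A"

definition tjoin :: "nat set \<Rightarrow> nat set \<Rightarrow> nat set" (infixl "\<oplus>\<^sub>T" 65) where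
  "A \<oplus>\<^sub>T B = {2 * n | n. n \<in> A} \<union> {2 * n + 1 | n. n \<in> B}"

definition tdeg :: "nat set \<Rightarrow> nat set set" where
  "tdeg A = {B. turing_eq A B}"

definition turing_degrees :: "nat set set set" where
  "turing_degrees = range tdeg"

definition degree_ideal :: "nat set set set \<Rightarrow> bool" where
  "degree_ideal S \<longleftrightarrow>
     S \<noteq> {} \<and>
     (\<forall>A B. tdeg A \<in> S \<longrightarrow> tdeg B \<in> S \<longrightarrow> tdeg (A \<oplus>\<^sub>T B) \<in> S) \<and>
     (\<forall>A B. tdeg A \<in> S \<longrightarrow> B \<le>\<^sub>T A \<longrightarrow> tdeg B \<in> S)"

definition rat_of_code :: "nat \<Rightarrow> rat" where
  "rat_of_code n = (case prod_decode n of (a, b) \<Rightarrow> of_int (int_decode a) / of_nat (Suc b))"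

definition real_cut :: "real \<Rightarrow> nat set" where
  "real_cut x = {n. real_of_rat (rat_of_code n) < x}"

definition real_deg :: "real \<Rightarrow> nat set set" where
  "real_deg x = tdeg (real_cut x)"

definition reals_of_degrees :: "nat set set set \<Rightarrow> real set" where
  "reals_of_degrees S = {x. real_deg x \<in> S}"

definition is_subfield :: "real set \<Rightarrow> bool" where
  "is_subfield K \<longleftrightarrow> 0 \<in> K \<and> 1 \<in> K \<and>
     (\<forall>x\<in>K. \<forall>y\<in>K. x + y \<in> K \<and> x * y \<in> K) \<and>
     (\<forall>x\<in>K. - x \<in> K) \<and> (\<forall>x\<in>K. x \<noteq> 0 \<longrightarrow> inverse x \<in> K)"

end

theory Submission
  imports Defs
begin

text \<open>Call \<open>x\<close> computable in an oracle \<open>f\<close> if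
  both its lower and its upper cut are c.e. in \<open>f\<close>; by Post's theorem this holds iff the cut of
  \<open>x\<close> is computable in \<open>f\<close>. These reals contain the rationals and are closed under the field
  operations, because each operation is monotone and continuous and so its cuts are projections of
  decidable relations on the cuts of the arguments. Hence if \<open>S\<close> is an ideal and the degrees of
  \<open>x\<close>, \<open>y\<close> lie in \<open>S\<close>, every field combination of \<open>x\<close> and \<open>y\<close> is computable from the join of
  their cuts, so its degree lies in \<open>S\<close>. Rationals are computable in every oracle, so their
  degrees lie in the nonempty, downward closed \<open>S\<close>.

  Conversely, the real \<open>\<Sum>k. \<chi>\<^sub>C(k) / 4\<^bsup>k+1\<^esup>\<close> has the degree of \<open>C\<close>, and since
  its base-4 digits are 0 or 1 the coding is additive on sets with disjoint supports. So the real
  coding \<open>A \<oplus> B\<close> is the sum of those coding \<open>A \<oplus> \<emptyset>\<close> and \<open>\<emptyset> \<oplus> B\<close>, which have the degrees of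
  \<open>A\<close> and \<open>B\<close>; and if \<open>B \<le>\<^sub>T A\<close>, the real coding \<open>\<emptyset> \<oplus> B\<close> is the difference of those coding
  \<open>A \<oplus> B\<close> and \<open>A \<oplus> \<emptyset>\<close>, both of the degree of \<open>A\<close>.\<close>

section \<open>Computability relative to an oracle\<close>

abbreviation npair :: "nat \<Rightarrow> nat \<Rightarrow> nat" where "npair a b \<equiv> prod_encode (a, b)"
abbreviation nfst :: "nat \<Rightarrow> nat" where "nfst n \<equiv> fst (prod_decode n)"
abbreviation nsnd :: "nat \<Rightarrow> nat" where "nsnd n \<equiv> snd (prod_decode n)"

definition rel_computable :: "(nat \<Rightarrow> nat) \<Rightarrow> (nat \<Rightarrow> nat) \<Rightarrow> bool" where
  "rel_computable f g \<longleftrightarrow> (\<exists>c. \<forall>n. eval f c n (g n))"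

lemma turing_le_iff_rel_computable: "A \<le>\<^sub>T B \<longleftrightarrow> rel_computable (chi B) (chi A)"
  unfolding turing_le_def rel_computable_def ..

lemma rel_computable_cong: "rel_computable f g \<Longrightarrow> (\<And>n. g n = h n) \<Longrightarrow> rel_computable f h"
  unfolding rel_computable_def by metis

lemma rel_computable_zero: "rel_computable f (\<lambda>n. 0)"
  unfolding rel_computable_def by (metis eval.zero)

lemma rel_computable_fst: "rel_computable f nfst"
  unfolding rel_computable_def by (metis eval.left)

lemma rel_computable_snd: "rel_computable f nsnd"
  unfolding rel_computable_def by (metis eval.right)

lemma rel_computable_oracle: "rel_computable f f"
  unfolding rel_computable_def by (metis eval.query)

lemma rel_computable_compose:
  "rel_computable f g \<Longrightarrow> rel_computable f h \<Longrightarrow> rel_computable f (\<lambda>n. g (h n))"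
  unfolding rel_computable_def by (metis eval.comp)

lemma rel_computable_pair:
  "rel_computable f g \<Longrightarrow> rel_computable f h \<Longrightarrow> rel_computable f (\<lambda>n. npair (g n) (h n))"
  unfolding rel_computable_def by (metis eval.pair)

lemma rel_computable_id: "rel_computable f (\<lambda>n. n)"
  using rel_computable_pair[OF rel_computable_fst rel_computable_snd] by simp

lemma rel_computable_Suc: "rel_computable f g \<Longrightarrow> rel_computable f (\<lambda>n. Suc (g n))"
  using rel_computable_compose[of f Suc g] unfolding rel_computable_def by (metis eval.succ)

lemma rel_computable_const: "rel_computable f (\<lambda>n. k)"
  by (induction k) (auto intro: rel_computable_zero rel_computable_Suc)

lemma rel_computable_binop:
  "rel_computable f (\<lambda>p. F (nfst p) (nsnd p)) \<Longrightarrow> rel_computable f g \<Longrightarrow> rel_computable f h \<Longrightarrow>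
   rel_computable f (\<lambda>n. F (g n) (h n))"
  using rel_computable_compose[OF _ rel_computable_pair] by fastforce

lemma rel_computable_prim_rec:
  assumes "rel_computable f g" and "rel_computable f (\<lambda>p. h (nfst p) (nfst (nsnd p)) (nsnd (nsnd p)))"
  shows "rel_computable f (\<lambda>p. rec_nat (g (nfst p)) (h (nfst p)) (nsnd p))"
proof -
  obtain cg where cg: "\<forall>n. eval f cg n (g n)"
    using assms(1) unfolding rel_computable_def by auto
  obtain ch where ch: "\<forall>p. eval f ch p (h (nfst p) (nfst (nsnd p)) (nsnd (nsnd p)))"
    using assms(2) unfolding rel_computable_def by auto
  have "eval f (CPrec cg ch) (npair a k) (rec_nat (g a) (h a) k)" for a k
  proof (induction k)
    case 0
    then show ?case using cg by (simp add: eval.prec0)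
  next
    case (Suc k)
    then show ?case using ch[rule_format, of "npair a (npair k _)"] by (simp add: eval.precS)
  qed
  then have "eval f (CPrec cg ch) p (rec_nat (g (nfst p)) (h (nfst p)) (nsnd p))" for p
    by (metis prod.collapse prod_decode_inverse)
  then show ?thesis unfolding rel_computable_def by blast
qed

lemma rel_computable_rec_nat:
  assumes "rel_computable f (\<lambda>p. h (nfst p) (nsnd p))"
  shows "rel_computable f (rec_nat c h)"
proof -
  have "rel_computable f (\<lambda>p. h (nfst (nsnd p)) (nsnd (nsnd p)))"
    by (rule rel_computable_compose[OF assms rel_computable_snd])
  from rel_computable_prim_rec[OF rel_computable_const[of f c], where h="\<lambda>_. h", OF this]
  have "rel_computable f (\<lambda>p. rec_nat c h (nsnd p))" .
  from rel_computable_compose[OF this rel_computable_pair[OF rel_computable_zero rel_computable_id]]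
  show ?thesis by simp
qed

lemma rel_computable_add:
  assumes "rel_computable f g" and "rel_computable f h"
  shows "rel_computable f (\<lambda>n. g n + h n)"
proof -
  have "rel_computable f (\<lambda>p. rec_nat (nfst p) (\<lambda>_ r. Suc r) (nsnd p))"
    by (rule rel_computable_prim_rec[where h="\<lambda>_ _ r. Suc r", OF rel_computable_id])
      (intro rel_computable_Suc rel_computable_compose[OF rel_computable_snd rel_computable_snd])
  moreover have "rec_nat a (\<lambda>_ r. Suc r) k = a + k" for a k :: nat
    by (induction k) auto
  ultimately show ?thesis
    using rel_computable_binop[of f "(+)"] assms by simp
qed

lemma rel_computable_mult:
  assumes "rel_computable f g" and "rel_computable f h"
  shows "rel_computable f (\<lambda>n. g n * h n)"
proof -
  have "rel_computable f (\<lambda>p. rec_nat 0 (\<lambda>_ r. r + nfst p) (nsnd p))"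
    by (rule rel_computable_prim_rec[where h="\<lambda>a _ r. r + a", OF rel_computable_const])
      (intro rel_computable_add rel_computable_fst
        rel_computable_compose[OF rel_computable_snd rel_computable_snd])
  moreover have "rec_nat 0 (\<lambda>_ r. r + a) k = a * k" for a k :: nat
    by (induction k) auto
  ultimately show ?thesis
    using rel_computable_binop[of f "(*)"] assms by simp
qed

lemma rel_computable_diff:
  assumes "rel_computable f g" and "rel_computable f h"
  shows "rel_computable f (\<lambda>n. g n - h n)"
proof -
  have "rec_nat 0 (\<lambda>k _. k) = (\<lambda>n :: nat. n - 1)"
  proof
    show "rec_nat 0 (\<lambda>k _. k) n = n - 1" for n :: nat
      by (cases n) auto
  qed
  with rel_computable_rec_nat[OF rel_computable_fst, of f 0]
  have "rel_computable f (\<lambda>n. n - 1)" by simp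
  then have "rel_computable f (\<lambda>p. rec_nat (nfst p) (\<lambda>_ r. r - 1) (nsnd p))"
    by (intro rel_computable_prim_rec[where h="\<lambda>_ _ r. r - 1"] rel_computable_id
        rel_computable_compose[OF _ rel_computable_compose[OF rel_computable_snd rel_computable_snd]])
  moreover have "rec_nat a (\<lambda>_ r. r - 1) k = a - k" for a k :: nat
    by (induction k) auto
  ultimately show ?thesis
    using rel_computable_binop[of f "(-)"] assms by simp
qed

lemma rel_computable_power:
  assumes "rel_computable f g" and "rel_computable f h"
  shows "rel_computable f (\<lambda>n. g n ^ h n)"
proof -
  have "rel_computable f (\<lambda>p. rec_nat 1 (\<lambda>_ r. r * nfst p) (nsnd p))"
    by (rule rel_computable_prim_rec[where h="\<lambda>a _ r. r * a", OF rel_computable_const])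
      (intro rel_computable_mult rel_computable_fst
        rel_computable_compose[OF rel_computable_snd rel_computable_snd])
  moreover have "rec_nat 1 (\<lambda>_ r. r * a) k = a ^ k" for a k :: nat
    by (induction k) auto
  ultimately show ?thesis
    using rel_computable_binop[of f "(^)"] assms by simp
qed

definition rel_decidable :: "(nat \<Rightarrow> nat) \<Rightarrow> (nat \<Rightarrow> bool) \<Rightarrow> bool" where
  "rel_decidable f P \<longleftrightarrow> rel_computable f (\<lambda>n. if P n then 1 else 0)"

lemma rel_decidable_iff_chi: "rel_decidable f (\<lambda>n. n \<in> A) \<longleftrightarrow> rel_computable f (chi A)"
  unfolding rel_decidable_def chi_def ..

lemma rel_decidable_cong: "rel_decidable f P \<Longrightarrow> (\<And>n. P n = Q n) \<Longrightarrow> rel_decidable f Q"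
  unfolding rel_decidable_def by simp

lemma rel_decidable_compose:
  "rel_decidable f P \<Longrightarrow> rel_computable f g \<Longrightarrow> rel_decidable f (\<lambda>n. P (g n))"
  unfolding rel_decidable_def using rel_computable_compose[of f "\<lambda>n. if P n then 1 else 0" g] by simp

lemma rel_decidable_const: "rel_decidable f (\<lambda>n. b)"
  unfolding rel_decidable_def by (rule rel_computable_const)

lemma rel_decidable_less:
  "rel_computable f g \<Longrightarrow> rel_computable f h \<Longrightarrow> rel_decidable f (\<lambda>n. g n < h n)"
  unfolding rel_decidable_def
  by (rule rel_computable_cong[where g="\<lambda>n. 1 - (1 - (h n - g n))"])
    (auto intro!: rel_computable_diff rel_computable_const)

lemma rel_decidable_not: "rel_decidable f P \<Longrightarrow> rel_decidable f (\<lambda>n. \<not> P n)"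
  unfolding rel_decidable_def
  by (rule rel_computable_cong[where g="\<lambda>n. 1 - (if P n then 1 else 0)"])
    (auto intro!: rel_computable_diff rel_computable_const)

lemma rel_decidable_conj: "rel_decidable f P \<Longrightarrow> rel_decidable f Q \<Longrightarrow> rel_decidable f (\<lambda>n. P n \<and> Q n)"
  unfolding rel_decidable_def
  by (rule rel_computable_cong[where g="\<lambda>n. (if P n then 1 else 0) * (if Q n then 1 else 0)"])
    (auto intro!: rel_computable_mult)

lemma rel_decidable_disj: "rel_decidable f P \<Longrightarrow> rel_decidable f Q \<Longrightarrow> rel_decidable f (\<lambda>n. P n \<or> Q n)"
  using rel_decidable_not[OF rel_decidable_conj[OF rel_decidable_not rel_decidable_not], of f P Q]
  by simp

lemma rel_decidable_le:
  "rel_computable f g \<Longrightarrow> rel_computable f h \<Longrightarrow> rel_decidable f (\<lambda>n. g n \<le> h n)"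
  using rel_decidable_not[OF rel_decidable_less[of f h g]] by (simp add: not_less)

lemma rel_computable_If:
  "rel_decidable f P \<Longrightarrow> rel_computable f g \<Longrightarrow> rel_computable f h \<Longrightarrow>
   rel_computable f (\<lambda>n. if P n then g n else h n)"
  unfolding rel_decidable_def
  by (rule rel_computable_cong[where
        g="\<lambda>n. (if P n then 1 else 0) * g n + (1 - (if P n then 1 else 0)) * h n"])
    (auto intro!: rel_computable_mult rel_computable_add rel_computable_diff rel_computable_const)

lemma rel_decidable_even: "rel_computable f g \<Longrightarrow> rel_decidable f (\<lambda>n. even (g n))"
proof -
  assume "rel_computable f g"
  have "rec_nat 1 (\<lambda>_ r. 1 - r) = (\<lambda>n. if even n then 1 else 0 :: nat)"
  proof
    show "rec_nat 1 (\<lambda>_ r. 1 - r) n = (if even n then 1 else 0 :: nat)" for n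
      by (induction n) auto
  qed
  moreover have "rel_computable f (rec_nat 1 (\<lambda>_ r. 1 - r))"
    by (intro rel_computable_rec_nat rel_computable_diff rel_computable_const rel_computable_snd)
  ultimately have "rel_decidable f even"
    unfolding rel_decidable_def by simp
  then show ?thesis using \<open>rel_computable f g\<close> by (rule rel_decidable_compose)
qed

lemma rel_computable_div2: "rel_computable f g \<Longrightarrow> rel_computable f (\<lambda>n. g n div 2)"
proof -
  assume "rel_computable f g"
  have "rel_computable f (\<lambda>p. nsnd p + (if even (nfst p) then 0 else 1))"
    by (intro rel_computable_add rel_computable_snd rel_computable_If rel_decidable_even
        rel_computable_fst rel_computable_const)
  from rel_computable_rec_nat[OF this, of 0]
  have "rel_computable f (rec_nat 0 (\<lambda>k r. r + (if even k then 0 else 1)))" .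
  moreover have "rec_nat 0 (\<lambda>k r. r + (if even k then 0 else 1)) = (\<lambda>n :: nat. n div 2)"
  proof
    show "rec_nat 0 (\<lambda>k r. r + (if even k then 0 else 1)) n = n div 2" for n :: nat
      by (induction n) auto
  qed
  ultimately show ?thesis
    using rel_computable_compose[OF _ \<open>rel_computable f g\<close>] by simp
qed

lemma rel_computable_Least:
  assumes "rel_computable f g" and "\<And>a. \<exists>k. g (npair a k) = 0"
  shows "rel_computable f (\<lambda>a. LEAST k. g (npair a k) = 0)"
proof -
  obtain c where c: "\<forall>n. eval f c n (g n)"
    using assms(1) unfolding rel_computable_def by auto
  have "eval f (CRfind c) a (LEAST k. g (npair a k) = 0)" for a
  proof (rule eval.rfind)
    show "eval f c (npair a (LEAST k. g (npair a k) = 0)) 0"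
      using LeastI_ex[OF assms(2)] c by metis
    show "\<forall>i<(LEAST k. g (npair a k) = 0). \<exists>v. v \<noteq> 0 \<and> eval f c (npair a i) v"
      using not_less_Least c by blast
  qed
  then show ?thesis unfolding rel_computable_def by blast
qed

fun subst_oracle :: "rcode \<Rightarrow> rcode \<Rightarrow> rcode" where
  "subst_oracle d COracle = d"
| "subst_oracle d (CPair a b) = CPair (subst_oracle d a) (subst_oracle d b)"
| "subst_oracle d (CComp a b) = CComp (subst_oracle d a) (subst_oracle d b)"
| "subst_oracle d (CPrec a b) = CPrec (subst_oracle d a) (subst_oracle d b)"
| "subst_oracle d (CRfind a) = CRfind (subst_oracle d a)"
| "subst_oracle d c = c"

lemma eval_subst_oracle:
  assumes "eval g c n v" and "\<forall>m. eval f d m (g m)"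
  shows "eval f (subst_oracle d c) n v"
  using assms
proof (induction rule: eval.induct)
  case (rfind c a k)
  then have "\<forall>i<k. \<exists>v. v \<noteq> 0 \<and> eval f (subst_oracle d c) (npair a i) v"
    by blast
  with rfind show ?case
    by (simp add: eval.rfind)
qed (auto intro: eval.intros)

lemma rel_computable_trans: "rel_computable g h \<Longrightarrow> rel_computable f g \<Longrightarrow> rel_computable f h"
  unfolding rel_computable_def using eval_subst_oracle by blast

lemma turing_le_refl: "A \<le>\<^sub>T A"
  unfolding turing_le_iff_rel_computable by (rule rel_computable_oracle)

lemma turing_le_trans: "A \<le>\<^sub>T B \<Longrightarrow> B \<le>\<^sub>T C \<Longrightarrow> A \<le>\<^sub>T C"
  unfolding turing_le_iff_rel_computable using rel_computable_trans by blast

lemma tdeg_eqI: "turing_eq A B \<Longrightarrow> tdeg A = tdeg B"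
  unfolding tdeg_def turing_eq_def using turing_le_trans by blast

definition rel_ce :: "(nat \<Rightarrow> nat) \<Rightarrow> (nat \<Rightarrow> bool) \<Rightarrow> bool" where
  "rel_ce f P \<longleftrightarrow> (\<exists>Q. rel_decidable f Q \<and> (\<forall>n. P n = (\<exists>m. Q (npair n m))))"

lemma rel_ce_cong: "rel_ce f P \<Longrightarrow> (\<And>n. P n = Q n) \<Longrightarrow> rel_ce f Q"
  unfolding rel_ce_def by simp

lemma rel_ce_if_rel_decidable: "rel_decidable f P \<Longrightarrow> rel_ce f P"
  unfolding rel_ce_def
  by (rule exI[where x="\<lambda>p. P (nfst p)"]) (auto intro: rel_decidable_compose rel_computable_fst)

lemma rel_ce_trans: "rel_ce g P \<Longrightarrow> rel_computable f g \<Longrightarrow> rel_ce f P"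
  unfolding rel_ce_def rel_decidable_def using rel_computable_trans by blast

lemma rel_ce_compose: "rel_ce f P \<Longrightarrow> rel_computable f g \<Longrightarrow> rel_ce f (\<lambda>n. P (g n))"
proof -
  assume "rel_ce f P" and g: "rel_computable f g"
  then obtain Q where Q: "rel_decidable f Q" "\<And>n. P n = (\<exists>m. Q (npair n m))"
    unfolding rel_ce_def by auto
  have "rel_decidable f (\<lambda>p. Q (npair (g (nfst p)) (nsnd p)))"
    by (intro rel_decidable_compose[OF Q(1)] rel_computable_pair rel_computable_compose[OF g]
        rel_computable_fst rel_computable_snd)
  then show ?thesis
    unfolding rel_ce_def using Q(2) by (intro exI[of _ "\<lambda>p. Q (npair (g (nfst p)) (nsnd p))"]) auto
qed

lemma rel_ce_conj: "rel_ce f P \<Longrightarrow> rel_ce f R \<Longrightarrow> rel_ce f (\<lambda>n. P n \<and> R n)"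
proof -
  assume "rel_ce f P" "rel_ce f R"
  then obtain Q1 Q2 where Q: "rel_decidable f Q1" "\<And>n. P n = (\<exists>m. Q1 (npair n m))"
    "rel_decidable f Q2" "\<And>n. R n = (\<exists>m. Q2 (npair n m))"
    unfolding rel_ce_def by metis
  let ?Q = "\<lambda>p. Q1 (npair (nfst p) (nfst (nsnd p))) \<and> Q2 (npair (nfst p) (nsnd (nsnd p)))"
  have "rel_decidable f ?Q"
    by (intro rel_decidable_conj rel_decidable_compose[OF Q(1)] rel_decidable_compose[OF Q(3)]
        rel_computable_pair rel_computable_fst rel_computable_compose[OF rel_computable_fst]
        rel_computable_compose[OF rel_computable_snd] rel_computable_snd)
  moreover have "(P n \<and> R n) = (\<exists>m. ?Q (npair n m))" for n
  proof
    assume "P n \<and> R n"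
    then obtain m1 m2 where "Q1 (npair n m1)" "Q2 (npair n m2)"
      using Q by auto
    then show "\<exists>m. ?Q (npair n m)"
      by (intro exI[of _ "npair m1 m2"]) simp
  qed (auto simp: Q)
  ultimately show ?thesis
    unfolding rel_ce_def by blast
qed

lemma rel_ce_ex: "rel_ce f (\<lambda>p. P (nfst p) (nsnd p)) \<Longrightarrow> rel_ce f (\<lambda>n. \<exists>m. P n m)"
proof -
  assume "rel_ce f (\<lambda>p. P (nfst p) (nsnd p))"
  then obtain Q where Q: "rel_decidable f Q" "\<And>p. P (nfst p) (nsnd p) = (\<exists>m. Q (npair p m))"
    unfolding rel_ce_def by auto
  let ?Q = "\<lambda>p. Q (npair (npair (nfst p) (nfst (nsnd p))) (nsnd (nsnd p)))"
  have "rel_decidable f ?Q"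
    by (intro rel_decidable_compose[OF Q(1)] rel_computable_pair rel_computable_fst
        rel_computable_compose[OF rel_computable_fst] rel_computable_compose[OF rel_computable_snd]
        rel_computable_snd)
  moreover have "(\<exists>m. P n m) = (\<exists>w. ?Q (npair n w))" for n
  proof
    assume "\<exists>m. P n m"
    then obtain m m' where "Q (npair (npair n m) m')"
      using Q(2)[of "npair n _"] by fastforce
    then show "\<exists>w. ?Q (npair n w)"
      by (intro exI[of _ "npair m m'"]) simp
  next
    assume "\<exists>w. ?Q (npair n w)"
    then show "\<exists>m. P n m"
      using Q(2)[of "npair n _"] by fastforce
  qed
  ultimately show ?thesis
    unfolding rel_ce_def by blast
qed

lemma rel_ce_bex:
  assumes "rel_ce f A" and "rel_decidable f (\<lambda>p. D (nfst p) (nsnd p))"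
    and "\<And>n. P n \<longleftrightarrow> (\<exists>a. A a \<and> D n a)"
  shows "rel_ce f P"
proof -
  have "rel_ce f (\<lambda>p. A (nsnd p) \<and> D (nfst p) (nsnd p))"
    by (intro rel_ce_conj rel_ce_compose[OF assms(1)] rel_computable_snd
        rel_ce_if_rel_decidable assms(2))
  from rel_ce_ex[OF this] show ?thesis
    by (rule rel_ce_cong) (simp add: assms(3))
qed

lemma rel_ce_bex2:
  assumes "rel_ce f A" and "rel_ce f B"
    and "rel_decidable f (\<lambda>p. D (nfst p) (nfst (nsnd p)) (nsnd (nsnd p)))"
    and "\<And>n. P n \<longleftrightarrow> (\<exists>a b. A a \<and> B b \<and> D n a b)"
  shows "rel_ce f P"
proof (rule rel_ce_bex[where A="\<lambda>w. A (nfst w) \<and> B (nsnd w)" and D="\<lambda>n w. D n (nfst w) (nsnd w)"])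
  show "rel_ce f (\<lambda>w. A (nfst w) \<and> B (nsnd w))"
    by (intro rel_ce_conj rel_ce_compose[OF assms(1)] rel_ce_compose[OF assms(2)]
        rel_computable_fst rel_computable_snd)
  show "rel_decidable f (\<lambda>p. D (nfst p) (nfst (nsnd p)) (nsnd (nsnd p)))"
    by (rule assms(3))
  show "P n \<longleftrightarrow> (\<exists>w. (A (nfst w) \<and> B (nsnd w)) \<and> D n (nfst w) (nsnd w))" for n
    unfolding assms(4) by (metis fst_conv snd_conv prod_encode_inverse)
qed

text \<open>Post's theorem: search for a witness of either side.\<close>
lemma rel_decidable_if_rel_ce_both:
  assumes "rel_ce f P" and "rel_ce f (\<lambda>n. \<not> P n)"
  shows "rel_decidable f P"
proof -
  obtain Q1 Q2 where Q: "rel_decidable f Q1" "\<And>n. P n = (\<exists>m. Q1 (npair n m))"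
    "rel_decidable f Q2" "\<And>n. (\<not> P n) = (\<exists>m. Q2 (npair n m))"
    using assms unfolding rel_ce_def by metis
  let ?G = "\<lambda>p. if Q1 p \<or> Q2 p then 0 else (1::nat)"
  have ex: "\<exists>k. ?G (npair a k) = 0" for a
    using Q(2)[of a] Q(4)[of a] by (cases "P a") auto
  define M where "M = (\<lambda>a. LEAST k. ?G (npair a k) = 0)"
  have "rel_computable f M"
    unfolding M_def
    by (intro rel_computable_Least ex rel_computable_If rel_decidable_disj Q(1,3) rel_computable_const)
  then have "rel_decidable f (\<lambda>n. Q1 (npair n (M n)))"
    by (intro rel_decidable_compose[OF Q(1)] rel_computable_pair rel_computable_id)
  moreover have "Q1 (npair n (M n)) = P n" for n
  proof -
    have "?G (npair n (M n)) = 0"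
      unfolding M_def by (rule LeastI_ex[OF ex])
    then show ?thesis
      using Q(2)[of n] Q(4)[of n] by (metis zero_neq_one)
  qed
  ultimately show ?thesis
    by (rule rel_decidable_cong)
qed

section \<open>Arithmetic on codes of rationals\<close>

definition qc_val :: "nat \<Rightarrow> real" where
  "qc_val n = real_of_rat (rat_of_code n)"

definition qc_num_pos :: "nat \<Rightarrow> nat" where
  "qc_num_pos n = (if even (nfst n) then nfst n div 2 else 0)"

definition qc_num_neg :: "nat \<Rightarrow> nat" where
  "qc_num_neg n = (if even (nfst n) then 0 else nfst n div 2 + 1)"

definition qc_den :: "nat \<Rightarrow> nat" where
  "qc_den n = Suc (nsnd n)"

lemma qc_den_pos: "0 < qc_den n"
  unfolding qc_den_def by simp

lemma qc_val_eq: "qc_val n = (real (qc_num_pos n) - real (qc_num_neg n)) / real (qc_den n)"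
proof -
  have "int_decode a = int (if even a then a div 2 else 0) - int (if even a then 0 else a div 2 + 1)"
    for a
    unfolding int_decode_def sum_decode_def by auto
  then show ?thesis
    unfolding qc_val_def rat_of_code_def qc_num_pos_def qc_num_neg_def qc_den_def
    by (simp add: case_prod_beta of_rat_divide of_rat_add of_rat_diff of_rat_minus)
qed

lemma rel_computable_qc_num_pos: "rel_computable f g \<Longrightarrow> rel_computable f (\<lambda>n. qc_num_pos (g n))"
  unfolding qc_num_pos_def
  by (intro rel_computable_If rel_decidable_even rel_computable_div2 rel_computable_const
      rel_computable_compose[OF rel_computable_fst])

lemma rel_computable_qc_num_neg: "rel_computable f g \<Longrightarrow> rel_computable f (\<lambda>n. qc_num_neg (g n))"
  unfolding qc_num_neg_def
  by (intro rel_computable_If rel_decidable_even rel_computable_div2 rel_computable_const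
      rel_computable_add rel_computable_compose[OF rel_computable_fst])

lemma rel_computable_qc_den: "rel_computable f g \<Longrightarrow> rel_computable f (\<lambda>n. qc_den (g n))"
  unfolding qc_den_def by (intro rel_computable_Suc rel_computable_compose[OF rel_computable_snd])

definition int_code :: "nat \<Rightarrow> nat \<Rightarrow> nat" where
  "int_code p m = (if m \<le> p then 2 * (p - m) else 2 * (m - p) - 1)"

lemma int_code_eq: "int_code p m = int_encode (int p - int m)"
  unfolding int_code_def int_encode_def sum_encode_def by (simp add: nat_diff_distrib) arith

definition qc_make :: "nat \<Rightarrow> nat \<Rightarrow> nat \<Rightarrow> nat" where
  "qc_make p m d = npair (int_code p m) (d - 1)"

lemma qc_val_make: "0 < d \<Longrightarrow> qc_val (qc_make p m d) = (real p - real m) / real d"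
  unfolding qc_val_def qc_make_def rat_of_code_def int_code_eq
  by (simp add: of_rat_divide of_rat_diff)

lemma rel_computable_qc_make:
  "rel_computable f g \<Longrightarrow> rel_computable f h \<Longrightarrow> rel_computable f k \<Longrightarrow>
   rel_computable f (\<lambda>n. qc_make (g n) (h n) (k n))"
  unfolding qc_make_def int_code_def
  by (intro rel_computable_pair rel_computable_If rel_decidable_le rel_computable_mult
      rel_computable_diff rel_computable_const)

definition qc_add :: "nat \<Rightarrow> nat \<Rightarrow> nat" where
  "qc_add a b = qc_make (qc_num_pos a * qc_den b + qc_num_pos b * qc_den a)
     (qc_num_neg a * qc_den b + qc_num_neg b * qc_den a) (qc_den a * qc_den b)"

definition qc_mult :: "nat \<Rightarrow> nat \<Rightarrow> nat" where
  "qc_mult a b = qc_make (qc_num_pos a * qc_num_pos b + qc_num_neg a * qc_num_neg b)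
     (qc_num_pos a * qc_num_neg b + qc_num_neg a * qc_num_pos b) (qc_den a * qc_den b)"

definition qc_uminus :: "nat \<Rightarrow> nat" where
  "qc_uminus a = qc_make (qc_num_neg a) (qc_num_pos a) (qc_den a)"

lemma qc_val_add: "qc_val (qc_add a b) = qc_val a + qc_val b"
  using qc_den_pos[of a] qc_den_pos[of b]
  unfolding qc_add_def by (simp add: qc_val_make qc_val_eq[of a] qc_val_eq[of b] field_simps)

lemma qc_val_mult: "qc_val (qc_mult a b) = qc_val a * qc_val b"
  using qc_den_pos[of a] qc_den_pos[of b]
  unfolding qc_mult_def by (simp add: qc_val_make qc_val_eq[of a] qc_val_eq[of b] field_simps)

lemma qc_val_uminus: "qc_val (qc_uminus a) = - qc_val a"
  using qc_den_pos[of a]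
  unfolding qc_uminus_def by (simp add: qc_val_make qc_val_eq[of a] minus_divide_left)

lemma rel_computable_qc_add:
  "rel_computable f g \<Longrightarrow> rel_computable f h \<Longrightarrow> rel_computable f (\<lambda>n. qc_add (g n) (h n))"
  unfolding qc_add_def
  by (intro rel_computable_qc_make rel_computable_add rel_computable_mult rel_computable_qc_num_pos
      rel_computable_qc_num_neg rel_computable_qc_den)

lemma rel_computable_qc_mult:
  "rel_computable f g \<Longrightarrow> rel_computable f h \<Longrightarrow> rel_computable f (\<lambda>n. qc_mult (g n) (h n))"
  unfolding qc_mult_def
  by (intro rel_computable_qc_make rel_computable_add rel_computable_mult rel_computable_qc_num_pos
      rel_computable_qc_num_neg rel_computable_qc_den)

lemma rel_computable_qc_uminus: "rel_computable f g \<Longrightarrow> rel_computable f (\<lambda>n. qc_uminus (g n))"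
  unfolding qc_uminus_def
  by (intro rel_computable_qc_make rel_computable_qc_num_pos rel_computable_qc_num_neg
      rel_computable_qc_den)

lemma qc_val_less_iff:
  "qc_val a < qc_val b \<longleftrightarrow>
   qc_num_pos a * qc_den b + qc_num_neg b * qc_den a < qc_num_pos b * qc_den a + qc_num_neg a * qc_den b"
proof -
  have "qc_val a < qc_val b \<longleftrightarrow>
      (real (qc_num_pos a) - real (qc_num_neg a)) * real (qc_den b)
        < (real (qc_num_pos b) - real (qc_num_neg b)) * real (qc_den a)"
    using qc_den_pos[of a] qc_den_pos[of b] unfolding qc_val_eq by (simp add: field_simps)
  also have "\<dots> \<longleftrightarrow> real (qc_num_pos a * qc_den b + qc_num_neg b * qc_den a)
      < real (qc_num_pos b * qc_den a + qc_num_neg a * qc_den b)"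
    by (simp add: algebra_simps)
  finally show ?thesis
    by (simp only: of_nat_less_iff)
qed

lemma rel_decidable_qc_val_less:
  "rel_computable f g \<Longrightarrow> rel_computable f h \<Longrightarrow> rel_decidable f (\<lambda>n. qc_val (g n) < qc_val (h n))"
  unfolding qc_val_less_iff
  by (intro rel_decidable_less rel_computable_add rel_computable_mult rel_computable_qc_num_pos
      rel_computable_qc_num_neg rel_computable_qc_den)

lemma qc_val_surj: "r \<in> \<rat> \<Longrightarrow> \<exists>n. qc_val n = r"
proof (elim Rats_cases)
  fix c :: rat
  assume r: "r = real_of_rat c"
  obtain a b where "quotient_of c = (a, b)"
    by fastforce
  then have "0 < b" and "c = of_int a / of_int b"
    by (simp_all add: quotient_of_denom_pos quotient_of_div)
  then have "rat_of_code (npair (int_encode a) (nat b - 1)) = c"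
    unfolding rat_of_code_def by simp
  then show ?thesis
    unfolding qc_val_def r by blast
qed

lemma qc_val_Rats: "qc_val n \<in> \<rat>"
  unfolding qc_val_def by simp

lemma qc_val_dense: "a < b \<Longrightarrow> \<exists>n. a < qc_val n \<and> qc_val n < b"
  using Rats_dense_in_real qc_val_surj by metis

lemma rel_decidable_qc_val_less_Rats:
  "rel_computable f g \<Longrightarrow> r \<in> \<rat> \<Longrightarrow> rel_decidable f (\<lambda>n. qc_val (g n) < r)"
  using rel_decidable_qc_val_less[OF _ rel_computable_const] qc_val_surj by metis

lemma rel_decidable_Rats_less_qc_val:
  "rel_computable f g \<Longrightarrow> r \<in> \<rat> \<Longrightarrow> rel_decidable f (\<lambda>n. r < qc_val (g n))"
  using rel_decidable_qc_val_less[OF rel_computable_const] qc_val_surj by metis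

lemma mem_real_cut_iff: "n \<in> real_cut x \<longleftrightarrow> qc_val n < x"
  unfolding real_cut_def qc_val_def by simp

section \<open>Reals computable relative to an oracle\<close>

definition lower_cut_ce :: "(nat \<Rightarrow> nat) \<Rightarrow> real \<Rightarrow> bool" where
  "lower_cut_ce f x \<longleftrightarrow> rel_ce f (\<lambda>n. qc_val n < x)"

definition upper_cut_ce :: "(nat \<Rightarrow> nat) \<Rightarrow> real \<Rightarrow> bool" where
  "upper_cut_ce f x \<longleftrightarrow> rel_ce f (\<lambda>n. x < qc_val n)"

definition rel_computable_real :: "(nat \<Rightarrow> nat) \<Rightarrow> real \<Rightarrow> bool" where
  "rel_computable_real f x \<longleftrightarrow> lower_cut_ce f x \<and> upper_cut_ce f x"

text \<open>At an irrational \<open>x\<close> the upper cut is the complement of the lower one, so Post's theorem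
  applies; at a rational \<open>x\<close> the cut is decidable outright.\<close>
lemma rel_computable_chi_real_cut:
  assumes "rel_computable_real f x"
  shows "rel_computable f (chi (real_cut x))"
proof -
  have "rel_decidable f (\<lambda>n. qc_val n < x)"
  proof (cases "x \<in> \<rat>")
    case True
    then show ?thesis
      by (intro rel_decidable_qc_val_less_Rats rel_computable_id)
  next
    case False
    then have "(\<not> qc_val n < x) = (x < qc_val n)" for n
      using qc_val_Rats[of n] by (metis linorder_neqE_linordered_idom not_less_iff_gr_or_eq)
    then show ?thesis
      using assms rel_decidable_if_rel_ce_both
      unfolding rel_computable_real_def lower_cut_ce_def upper_cut_ce_def by simp
  qed
  then show ?thesis
    unfolding rel_decidable_iff_chi[symmetric] mem_real_cut_iff .
qed

lemma rel_computable_real_real_cut: "rel_computable_real (chi (real_cut x)) x"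
  unfolding rel_computable_real_def lower_cut_ce_def upper_cut_ce_def
proof
  have "rel_decidable (chi (real_cut x)) (\<lambda>n. n \<in> real_cut x)"
    unfolding rel_decidable_iff_chi by (rule rel_computable_oracle)
  then have dec: "rel_decidable (chi (real_cut x)) (\<lambda>n. qc_val n < x)"
    by (simp add: mem_real_cut_iff)
  then show "rel_ce (chi (real_cut x)) (\<lambda>n. qc_val n < x)"
    by (rule rel_ce_if_rel_decidable)
  show "rel_ce (chi (real_cut x)) (\<lambda>n. x < qc_val n)"
  proof (rule rel_ce_bex[where A="\<lambda>m. \<not> qc_val m < x" and D="\<lambda>n m. qc_val m < qc_val n"])
    show "rel_ce (chi (real_cut x)) (\<lambda>m. \<not> qc_val m < x)"
      by (intro rel_ce_if_rel_decidable rel_decidable_not dec)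
    show "rel_decidable (chi (real_cut x)) (\<lambda>p. qc_val (nsnd p) < qc_val (nfst p))"
      by (intro rel_decidable_qc_val_less rel_computable_fst rel_computable_snd)
    show "x < qc_val n \<longleftrightarrow> (\<exists>m. \<not> qc_val m < x \<and> qc_val m < qc_val n)" for n
    proof
      assume "x < qc_val n"
      then obtain m where "x < qc_val m" "qc_val m < qc_val n"
        using qc_val_dense by blast
      then show "\<exists>m. \<not> qc_val m < x \<and> qc_val m < qc_val n"
        by force
    qed auto
  qed
qed

lemma rel_computable_real_trans:
  "rel_computable_real g x \<Longrightarrow> rel_computable f g \<Longrightarrow> rel_computable_real f x"
  unfolding rel_computable_real_def lower_cut_ce_def upper_cut_ce_def using rel_ce_trans by blast

lemma real_cut_turing_le_iff: "real_cut x \<le>\<^sub>T A \<longleftrightarrow> rel_computable_real (chi A) x"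
  unfolding turing_le_iff_rel_computable
  using rel_computable_chi_real_cut rel_computable_real_trans rel_computable_real_real_cut by blast

lemma rel_computable_real_Rats: "x \<in> \<rat> \<Longrightarrow> rel_computable_real f x"
  unfolding rel_computable_real_def lower_cut_ce_def upper_cut_ce_def
  by (intro conjI rel_ce_if_rel_decidable rel_decidable_qc_val_less_Rats
      rel_decidable_Rats_less_qc_val rel_computable_id)

lemma lower_cut_ce_add: "lower_cut_ce f x \<Longrightarrow> lower_cut_ce f y \<Longrightarrow> lower_cut_ce f (x + y)"
  unfolding lower_cut_ce_def
proof (erule rel_ce_bex2, assumption)
  show "rel_decidable f (\<lambda>p. qc_val (nfst p) < qc_val (qc_add (nfst (nsnd p)) (nsnd (nsnd p))))"
    by (intro rel_decidable_qc_val_less rel_computable_fst rel_computable_qc_add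
        rel_computable_compose[OF rel_computable_fst rel_computable_snd]
        rel_computable_compose[OF rel_computable_snd rel_computable_snd])
  show "qc_val n < x + y \<longleftrightarrow> (\<exists>a b. qc_val a < x \<and> qc_val b < y \<and> qc_val n < qc_val (qc_add a b))"
    for n
  proof
    assume "qc_val n < x + y"
    define e where "e = (x + y - qc_val n) / 2"
    have "0 < e"
      using \<open>qc_val n < x + y\<close> unfolding e_def by simp
    then obtain a b where a: "x - e < qc_val a" "qc_val a < x" and b: "y - e < qc_val b" "qc_val b < y"
      using qc_val_dense[of "x - e" x] qc_val_dense[of "y - e" y] by auto
    then have "qc_val n < qc_val (qc_add a b)"
      unfolding qc_val_add e_def by (simp add: field_simps)
    with a b show "\<exists>a b. qc_val a < x \<and> qc_val b < y \<and> qc_val n < qc_val (qc_add a b)"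
      by blast
  qed (auto simp: qc_val_add)
qed

lemma lower_cut_ce_uminus: "upper_cut_ce f x \<Longrightarrow> lower_cut_ce f (- x)"
  unfolding lower_cut_ce_def upper_cut_ce_def
proof (erule rel_ce_bex)
  show "rel_decidable f (\<lambda>p. qc_val (nfst p) < qc_val (qc_uminus (nsnd p)))"
    by (intro rel_decidable_qc_val_less rel_computable_fst rel_computable_qc_uminus rel_computable_snd)
  show "qc_val n < - x \<longleftrightarrow> (\<exists>a. x < qc_val a \<and> qc_val n < qc_val (qc_uminus a))" for n
    using qc_val_dense[of x "- qc_val n"] by (force simp: qc_val_uminus)
qed

lemma upper_cut_ce_uminus: "lower_cut_ce f x \<Longrightarrow> upper_cut_ce f (- x)"
  unfolding lower_cut_ce_def upper_cut_ce_def
proof (erule rel_ce_bex)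
  show "rel_decidable f (\<lambda>p. qc_val (qc_uminus (nsnd p)) < qc_val (nfst p))"
    by (intro rel_decidable_qc_val_less rel_computable_fst rel_computable_qc_uminus rel_computable_snd)
  show "- x < qc_val n \<longleftrightarrow> (\<exists>a. qc_val a < x \<and> qc_val (qc_uminus a) < qc_val n)" for n
    using qc_val_dense[of "- qc_val n" x] by (force simp: qc_val_uminus)
qed

lemma upper_cut_ce_add: "upper_cut_ce f x \<Longrightarrow> upper_cut_ce f y \<Longrightarrow> upper_cut_ce f (x + y)"
  using upper_cut_ce_uminus[OF lower_cut_ce_add[OF lower_cut_ce_uminus lower_cut_ce_uminus]] by simp

lemma less_mult_iff_ex_qc_val:
  fixes x y r :: real
  assumes "0 < x" "0 < y" and "0 < r"
  shows "r < x * y \<longleftrightarrow> (\<exists>a b. qc_val a < x \<and> qc_val b < y \<and> 0 < qc_val a \<and> r < qc_val a * qc_val b)"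
proof
  assume "r < x * y"
  then have "r / y < x"
    using assms(2) by (simp add: divide_less_eq mult.commute)
  then obtain a where a: "r / y < qc_val a" "qc_val a < x"
    using qc_val_dense by blast
  have "0 < qc_val a"
    using a(1) assms(2,3) by (metis divide_pos_pos less_trans)
  then have "r / qc_val a < y"
    using a(1) assms(2) by (simp add: field_simps)
  then obtain b where "r / qc_val a < qc_val b" "qc_val b < y"
    using qc_val_dense by blast
  with a \<open>0 < qc_val a\<close> show "\<exists>a b. qc_val a < x \<and> qc_val b < y \<and> 0 < qc_val a \<and> r < qc_val a * qc_val b"
    by (auto simp: field_simps)
next
  assume "\<exists>a b. qc_val a < x \<and> qc_val b < y \<and> 0 < qc_val a \<and> r < qc_val a * qc_val b"
  then obtain a b where ab: "qc_val a < x" "qc_val b < y" "0 < qc_val a" "r < qc_val a * qc_val b"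
    by blast
  have "qc_val a * qc_val b < qc_val a * y"
    using ab by simp
  also have "\<dots> < x * y"
    using ab assms(2) by simp
  finally show "r < x * y"
    using ab(4) by simp
qed

lemma lower_cut_ce_mult:
  assumes "lower_cut_ce f x" "lower_cut_ce f y" and "0 < x" "0 < y"
  shows "lower_cut_ce f (x * y)"
  unfolding lower_cut_ce_def
proof (rule rel_ce_bex2[OF assms(1,2)[unfolded lower_cut_ce_def],
      where D="\<lambda>n a b. \<not> 0 < qc_val n \<or> (0 < qc_val a \<and> qc_val n < qc_val (qc_mult a b))"])
  show "rel_decidable f (\<lambda>p. \<not> 0 < qc_val (nfst p) \<or>
      (0 < qc_val (nfst (nsnd p)) \<and> qc_val (nfst p) < qc_val (qc_mult (nfst (nsnd p)) (nsnd (nsnd p)))))"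
    by (intro rel_decidable_disj rel_decidable_not rel_decidable_conj rel_decidable_Rats_less_qc_val
        rel_decidable_qc_val_less rel_computable_qc_mult rel_computable_fst Rats_0
        rel_computable_compose[OF rel_computable_fst rel_computable_snd]
        rel_computable_compose[OF rel_computable_snd rel_computable_snd])
  show "qc_val n < x * y \<longleftrightarrow> (\<exists>a b. qc_val a < x \<and> qc_val b < y \<and>
      (\<not> 0 < qc_val n \<or> (0 < qc_val a \<and> qc_val n < qc_val (qc_mult a b))))" for n
  proof (cases "0 < qc_val n")
    case False
    obtain a b where "qc_val a < x" "qc_val b < y"
      using qc_val_dense[of "x - 1" x] qc_val_dense[of "y - 1" y] by auto
    with False show ?thesis
      using assms(3,4) by (auto intro: le_less_trans[OF _ mult_pos_pos])
  next
    case True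
    then show ?thesis
      using less_mult_iff_ex_qc_val[OF assms(3,4) True] by (auto simp: qc_val_mult)
  qed
qed

lemma upper_cut_ce_mult:
  assumes "upper_cut_ce f x" "upper_cut_ce f y" and "0 < x" "0 < y"
  shows "upper_cut_ce f (x * y)"
  unfolding upper_cut_ce_def
proof (rule rel_ce_bex2[OF assms(1,2)[unfolded upper_cut_ce_def],
      where D="\<lambda>n a b. qc_val (qc_mult a b) < qc_val n"])
  show "rel_decidable f (\<lambda>p. qc_val (qc_mult (nfst (nsnd p)) (nsnd (nsnd p))) < qc_val (nfst p))"
    by (intro rel_decidable_qc_val_less rel_computable_fst rel_computable_qc_mult
        rel_computable_compose[OF rel_computable_fst rel_computable_snd]
        rel_computable_compose[OF rel_computable_snd rel_computable_snd])
  show "x * y < qc_val n \<longleftrightarrow> (\<exists>a b. x < qc_val a \<and> y < qc_val b \<and> qc_val (qc_mult a b) < qc_val n)"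
    for n
    unfolding qc_val_mult
  proof
    assume "x * y < qc_val n"
    then have "x < qc_val n / y"
      using assms(4) by (simp add: less_divide_eq)
    then obtain a where a: "x < qc_val a" "qc_val a < qc_val n / y"
      using qc_val_dense by blast
    have "0 < qc_val a"
      using a(1) assms(3) by simp
    then have "y < qc_val n / qc_val a"
      using a(2) assms(4) by (simp add: field_simps)
    then obtain b where "y < qc_val b" "qc_val b < qc_val n / qc_val a"
      using qc_val_dense by blast
    with a \<open>0 < qc_val a\<close> show "\<exists>a b. x < qc_val a \<and> y < qc_val b \<and> qc_val a * qc_val b < qc_val n"
      by (auto simp: field_simps)
  next
    assume "\<exists>a b. x < qc_val a \<and> y < qc_val b \<and> qc_val a * qc_val b < qc_val n"
    then obtain a b where ab: "x < qc_val a" "y < qc_val b" "qc_val a * qc_val b < qc_val n"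
      by blast
    have "x * y < qc_val a * qc_val b"
      using ab assms(3,4) by (intro mult_strict_mono) auto
    with ab(3) show "x * y < qc_val n"
      by simp
  qed
qed

lemma lower_cut_ce_inverse:
  assumes "upper_cut_ce f x" and "0 < x"
  shows "lower_cut_ce f (inverse x)"
  unfolding lower_cut_ce_def
proof (rule rel_ce_bex[OF assms(1)[unfolded upper_cut_ce_def],
      where D="\<lambda>n m. \<not> 0 < qc_val n \<or> qc_val (qc_mult n m) < 1"])
  show "rel_decidable f (\<lambda>p. \<not> 0 < qc_val (nfst p) \<or> qc_val (qc_mult (nfst p) (nsnd p)) < 1)"
    by (intro rel_decidable_disj rel_decidable_not rel_decidable_Rats_less_qc_val
        rel_decidable_qc_val_less_Rats rel_computable_qc_mult rel_computable_fst rel_computable_snd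
        Rats_0 Rats_1)
  show "qc_val n < inverse x \<longleftrightarrow> (\<exists>m. x < qc_val m \<and> (\<not> 0 < qc_val n \<or> qc_val (qc_mult n m) < 1))"
    for n
    unfolding qc_val_mult
  proof
    assume less: "qc_val n < inverse x"
    obtain m where "x < qc_val m" "\<not> 0 < qc_val n \<or> qc_val m < inverse (qc_val n)"
    proof (cases "0 < qc_val n")
      case True
      then have "x < inverse (qc_val n)"
        using less_imp_inverse_less[OF less True] by simp
      with that show ?thesis
        using qc_val_dense by blast
    qed (use qc_val_dense[of x "x + 1"] in auto)
    then show "\<exists>m. x < qc_val m \<and> (\<not> 0 < qc_val n \<or> qc_val n * qc_val m < 1)"
      by (auto simp: field_simps)
  next
    assume "\<exists>m. x < qc_val m \<and> (\<not> 0 < qc_val n \<or> qc_val n * qc_val m < 1)"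
    then obtain m where m: "x < qc_val m" "\<not> 0 < qc_val n \<or> qc_val n * qc_val m < 1"
      by blast
    show "qc_val n < inverse x"
    proof (cases "0 < qc_val n")
      case True
      then have "qc_val n * x < 1"
        using m mult_strict_left_mono[OF m(1) True] by linarith
      with assms(2) show ?thesis
        by (simp add: field_simps)
    qed (use assms(2) in \<open>simp add: not_less le_less_trans\<close>)
  qed
qed

lemma upper_cut_ce_inverse:
  assumes "lower_cut_ce f x" and "0 < x"
  shows "upper_cut_ce f (inverse x)"
  unfolding upper_cut_ce_def
proof (rule rel_ce_bex[OF assms(1)[unfolded lower_cut_ce_def],
      where D="\<lambda>n m. 0 < qc_val n \<and> 1 < qc_val (qc_mult n m)"])
  show "rel_decidable f (\<lambda>p. 0 < qc_val (nfst p) \<and> 1 < qc_val (qc_mult (nfst p) (nsnd p)))"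
    by (intro rel_decidable_conj rel_decidable_Rats_less_qc_val rel_computable_qc_mult
        rel_computable_fst rel_computable_snd Rats_0 Rats_1)
  show "inverse x < qc_val n \<longleftrightarrow> (\<exists>m. qc_val m < x \<and> 0 < qc_val n \<and> 1 < qc_val (qc_mult n m))"
    for n
    unfolding qc_val_mult
  proof
    assume less: "inverse x < qc_val n"
    then have pos: "0 < qc_val n"
      using assms(2) by (meson inverse_positive_iff_positive less_trans)
    have "inverse (qc_val n) < x"
      using less_imp_inverse_less[OF less] assms(2) by simp
    then obtain m where "inverse (qc_val n) < qc_val m" "qc_val m < x"
      using qc_val_dense by blast
    with pos show "\<exists>m. qc_val m < x \<and> 0 < qc_val n \<and> 1 < qc_val n * qc_val m"
      by (auto simp: field_simps)
  next
    assume "\<exists>m. qc_val m < x \<and> 0 < qc_val n \<and> 1 < qc_val n * qc_val m"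
    then obtain m where m: "qc_val m < x" "0 < qc_val n" "1 < qc_val n * qc_val m"
      by blast
    then have "1 < qc_val n * x"
      using mult_strict_left_mono[OF m(1,2)] by linarith
    with assms(2) show "inverse x < qc_val n"
      by (simp add: field_simps)
  qed
qed

lemma rel_computable_real_add:
  "rel_computable_real f x \<Longrightarrow> rel_computable_real f y \<Longrightarrow> rel_computable_real f (x + y)"
  unfolding rel_computable_real_def using lower_cut_ce_add upper_cut_ce_add by blast

lemma rel_computable_real_uminus: "rel_computable_real f x \<Longrightarrow> rel_computable_real f (- x)"
  unfolding rel_computable_real_def using lower_cut_ce_uminus upper_cut_ce_uminus by blast

lemma rel_computable_real_abs: "rel_computable_real f x \<Longrightarrow> rel_computable_real f \<bar>x\<bar>"
  by (cases "0 \<le> x") (simp_all add: rel_computable_real_uminus)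

lemma rel_computable_real_mult:
  assumes "rel_computable_real f x" and "rel_computable_real f y"
  shows "rel_computable_real f (x * y)"
proof (cases "x = 0 \<or> y = 0")
  case True
  then show ?thesis
    by (auto intro: rel_computable_real_Rats)
next
  case False
  then have "rel_computable_real f (\<bar>x\<bar> * \<bar>y\<bar>)"
    using rel_computable_real_abs[OF assms(1)] rel_computable_real_abs[OF assms(2)]
    unfolding rel_computable_real_def by (simp add: lower_cut_ce_mult upper_cut_ce_mult)
  moreover have "x * y = \<bar>x\<bar> * \<bar>y\<bar> \<or> x * y = - (\<bar>x\<bar> * \<bar>y\<bar>)"
    by (auto simp: abs_if)
  ultimately show ?thesis
    using rel_computable_real_uminus by auto
qed

lemma rel_computable_real_inverse:
  assumes "rel_computable_real f x"
  shows "rel_computable_real f (inverse x)"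
proof (cases "x = 0")
  case True
  then show ?thesis
    by (simp add: rel_computable_real_Rats)
next
  case False
  then have "rel_computable_real f (inverse \<bar>x\<bar>)"
    using rel_computable_real_abs[OF assms]
    unfolding rel_computable_real_def by (simp add: lower_cut_ce_inverse upper_cut_ce_inverse)
  moreover have "inverse x = inverse \<bar>x\<bar> \<or> inverse x = - inverse \<bar>x\<bar>"
    by (auto simp: abs_if)
  ultimately show ?thesis
    using rel_computable_real_uminus by auto
qed

lemma chi_tjoin: "chi (A \<oplus>\<^sub>T B) n = (if even n then chi A (n div 2) else chi B (n div 2))"
proof (cases "even n")
  case True
  then have "n \<in> A \<oplus>\<^sub>T B \<longleftrightarrow> n div 2 \<in> A"
    unfolding tjoin_def by (auto; presburger)
  with True show ?thesis
    unfolding chi_def by simp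
next
  case False
  then have "n \<in> A \<oplus>\<^sub>T B \<longleftrightarrow> n div 2 \<in> B"
    unfolding tjoin_def by (auto; presburger)
  with False show ?thesis
    unfolding chi_def by simp
qed

lemma turing_le_tjoin_left: "A \<le>\<^sub>T A \<oplus>\<^sub>T B"
proof -
  have "rel_computable (chi (A \<oplus>\<^sub>T B)) (\<lambda>n. chi (A \<oplus>\<^sub>T B) (n + n))"
    by (intro rel_computable_compose[OF rel_computable_oracle] rel_computable_add rel_computable_id)
  then show ?thesis
    unfolding turing_le_iff_rel_computable by (rule rel_computable_cong) (simp add: chi_tjoin)
qed

lemma turing_le_tjoin_right: "B \<le>\<^sub>T A \<oplus>\<^sub>T B"
proof -
  have "rel_computable (chi (A \<oplus>\<^sub>T B)) (\<lambda>n. chi (A \<oplus>\<^sub>T B) (Suc (n + n)))"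
    by (intro rel_computable_compose[OF rel_computable_oracle] rel_computable_Suc rel_computable_add
        rel_computable_id)
  then show ?thesis
    unfolding turing_le_iff_rel_computable by (rule rel_computable_cong) (simp add: chi_tjoin)
qed

lemma tjoin_turing_le: "A \<le>\<^sub>T X \<Longrightarrow> B \<le>\<^sub>T X \<Longrightarrow> A \<oplus>\<^sub>T B \<le>\<^sub>T X"
  unfolding turing_le_iff_rel_computable
  by (rule rel_computable_cong[where g="\<lambda>n. if even n then chi A (n div 2) else chi B (n div 2)"])
    (auto simp: chi_tjoin intro!: rel_computable_If rel_decidable_even rel_computable_id
      rel_computable_compose[where g="chi A"] rel_computable_compose[where g="chi B"] rel_computable_div2)

lemma empty_turing_le: "{} \<le>\<^sub>T X"
  unfolding turing_le_iff_rel_computable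
  by (rule rel_computable_cong[OF rel_computable_zero]) (simp add: chi_def)

lemma turing_eq_tjoin_empty_right: "turing_eq (A \<oplus>\<^sub>T {}) A"
  unfolding turing_eq_def using tjoin_turing_le turing_le_refl empty_turing_le turing_le_tjoin_left
  by blast

lemma turing_eq_tjoin_empty_left: "turing_eq ({} \<oplus>\<^sub>T B) B"
  unfolding turing_eq_def using tjoin_turing_le turing_le_refl empty_turing_le turing_le_tjoin_right
  by blast

lemma turing_eq_tjoin_if_turing_le: "B \<le>\<^sub>T A \<Longrightarrow> turing_eq (A \<oplus>\<^sub>T B) A"
  unfolding turing_eq_def using tjoin_turing_le turing_le_refl turing_le_tjoin_left by blast

section \<open>An ideal of degrees yields a field\<close>

lemma mem_reals_of_degrees_iff: "x \<in> reals_of_degrees S \<longleftrightarrow> tdeg (real_cut x) \<in> S"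
  unfolding reals_of_degrees_def real_deg_def by simp

lemma reals_of_degrees_closed:
  assumes "degree_ideal S" and "x \<in> reals_of_degrees S" "y \<in> reals_of_degrees S"
    and "\<And>f. rel_computable_real f x \<Longrightarrow> rel_computable_real f y \<Longrightarrow> rel_computable_real f z"
  shows "z \<in> reals_of_degrees S"
proof -
  let ?A = "real_cut x \<oplus>\<^sub>T real_cut y"
  have "tdeg ?A \<in> S"
    using assms(1-3) unfolding degree_ideal_def mem_reals_of_degrees_iff by blast
  moreover have "rel_computable_real (chi ?A) x" "rel_computable_real (chi ?A) y"
    unfolding real_cut_turing_le_iff[symmetric] by (rule turing_le_tjoin_left turing_le_tjoin_right)+
  then have "real_cut z \<le>\<^sub>T ?A"
    unfolding real_cut_turing_le_iff by (rule assms(4))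
  ultimately show ?thesis
    using assms(1) unfolding degree_ideal_def mem_reals_of_degrees_iff by blast
qed

lemma Rats_subset_reals_of_degrees:
  assumes "degree_ideal S" and "S \<subseteq> turing_degrees"
  shows "\<rat> \<subseteq> reals_of_degrees S"
proof
  fix x :: real
  assume "x \<in> \<rat>"
  obtain A where A: "tdeg A \<in> S"
    using assms unfolding degree_ideal_def turing_degrees_def by blast
  have "real_cut x \<le>\<^sub>T A"
    unfolding real_cut_turing_le_iff using \<open>x \<in> \<rat>\<close> by (rule rel_computable_real_Rats)
  with A assms(1) show "x \<in> reals_of_degrees S"
    unfolding degree_ideal_def mem_reals_of_degrees_iff by blast
qed

lemma is_subfield_reals_of_degrees:
  assumes "degree_ideal S" and "S \<subseteq> turing_degrees"
  shows "is_subfield (reals_of_degrees S)"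
  unfolding is_subfield_def
proof (intro conjI ballI impI)
  show "0 \<in> reals_of_degrees S" "1 \<in> reals_of_degrees S"
    using Rats_subset_reals_of_degrees[OF assms] by auto
  fix x y
  assume x: "x \<in> reals_of_degrees S" and y: "y \<in> reals_of_degrees S"
  show "x + y \<in> reals_of_degrees S"
    using assms(1) x y rel_computable_real_add by (rule reals_of_degrees_closed)
  show "x * y \<in> reals_of_degrees S"
    using assms(1) x y rel_computable_real_mult by (rule reals_of_degrees_closed)
next
  fix x
  assume x: "x \<in> reals_of_degrees S"
  show "- x \<in> reals_of_degrees S"
    using assms(1) x x rel_computable_real_uminus by (rule reals_of_degrees_closed)
  show "inverse x \<in> reals_of_degrees S"
    using assms(1) x x rel_computable_real_inverse by (rule reals_of_degrees_closed)
qed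

section \<open>Coding sets of naturals as reals\<close>

definition real_of_set :: "nat set \<Rightarrow> real" where
  "real_of_set C = (\<Sum>k. real (chi C k) / 4 ^ Suc k)"

definition base4_prefix :: "nat set \<Rightarrow> nat \<Rightarrow> nat" where
  "base4_prefix C = rec_nat 0 (\<lambda>k r. 4 * r + chi C k)"

lemma base4_prefix_0 [simp]: "base4_prefix C 0 = 0"
  and base4_prefix_Suc [simp]: "base4_prefix C (Suc n) = 4 * base4_prefix C n + chi C n"
  unfolding base4_prefix_def by simp_all

lemma real_of_set_term_le: "real (chi C k) / 4 ^ Suc k \<le> (1/4) ^ Suc k"
proof -
  have "real (chi C k) / 4 ^ Suc k \<le> 1 / 4 ^ Suc k"
    unfolding chi_def by (simp add: divide_right_mono)
  then show ?thesis
    by (simp add: power_one_over)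
qed

lemma summable_real_of_set: "summable (\<lambda>k. real (chi C k) / 4 ^ Suc k)"
proof (rule summable_comparison_test)
  show "summable (\<lambda>k. (1/4::real) ^ Suc k)"
    by (simp add: summable_geometric)
  show "\<exists>N. \<forall>k\<ge>N. norm (real (chi C k) / 4 ^ Suc k) \<le> (1/4) ^ Suc k"
    using real_of_set_term_le by simp
qed

lemma sum_base4_digits: "(\<Sum>k<n. real (chi C k) / 4 ^ Suc k) = real (base4_prefix C n) / 4 ^ n"
  by (induction n) (simp_all add: field_simps)

lemma real_of_set_approx:
  "0 \<le> real_of_set C - real (base4_prefix C n) / 4 ^ n"
  "real_of_set C - real (base4_prefix C n) / 4 ^ n \<le> (1/4) ^ n / 3"
proof -
  let ?tail = "\<lambda>k. real (chi C (k + n)) / 4 ^ Suc (k + n)"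
  have split: "real_of_set C = (\<Sum>k. ?tail k) + real (base4_prefix C n) / 4 ^ n"
    unfolding real_of_set_def
    using suminf_split_initial_segment[OF summable_real_of_set, of C n] sum_base4_digits by simp
  have summable_tail: "summable ?tail"
    using summable_iff_shift[of "\<lambda>k. real (chi C k) / 4 ^ Suc k" n] summable_real_of_set by simp
  have "(\<lambda>k. (1/4::real) ^ k) sums (1 / (1 - 1/4))"
    by (rule geometric_sums) simp
  from sums_mult[OF this, of "(1/4) ^ Suc n"]
  have geometric: "(\<lambda>k. (1/4) ^ Suc n * (1/4::real) ^ k) sums ((1/4) ^ n / 3)"
    by simp
  have "?tail k \<le> (1/4) ^ Suc n * (1/4) ^ k" for k
    using real_of_set_term_le[of C "k + n"] by (simp add: power_add mult_ac)
  then have "(\<Sum>k. ?tail k) \<le> (\<Sum>k. (1/4) ^ Suc n * (1/4) ^ k)"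
    by (rule suminf_le[OF _ summable_tail sums_summable[OF geometric]])
  also have "\<dots> = (1/4) ^ n / 3"
    by (rule sums_unique[OF geometric, symmetric])
  finally have "(\<Sum>k. ?tail k) \<le> (1/4) ^ n / 3" .
  moreover have "0 \<le> (\<Sum>k. ?tail k)"
    by (intro suminf_nonneg summable_tail) simp
  ultimately show "0 \<le> real_of_set C - real (base4_prefix C n) / 4 ^ n"
    "real_of_set C - real (base4_prefix C n) / 4 ^ n \<le> (1/4) ^ n / 3"
    using split by simp_all
qed

lemma quarter_power_less: "0 < e \<Longrightarrow> \<exists>n. (1/4::real) ^ n < e"
  using real_arch_pow_inv[of e "1/4"] by simp

lemma rel_computable_base4_prefix: "rel_computable (chi C) (base4_prefix C)"
  unfolding base4_prefix_def
  by (intro rel_computable_rec_nat rel_computable_add rel_computable_mult rel_computable_const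
      rel_computable_snd rel_computable_compose[OF rel_computable_oracle rel_computable_fst])

lemma lower_cut_ce_real_of_set: "lower_cut_ce (chi C) (real_of_set C)"
proof -
  have "rel_decidable (chi C)
      (\<lambda>p. qc_val (nfst p) < qc_val (qc_make (base4_prefix C (nsnd p)) 0 (4 ^ nsnd p)))"
    by (intro rel_decidable_qc_val_less rel_computable_fst rel_computable_qc_make rel_computable_const
        rel_computable_compose[OF rel_computable_base4_prefix] rel_computable_power rel_computable_snd)
  then have "rel_decidable (chi C) (\<lambda>p. qc_val (nfst p) < real (base4_prefix C (nsnd p)) / 4 ^ nsnd p)"
    by (simp add: qc_val_make)
  then have "rel_ce (chi C) (\<lambda>q. \<exists>n. qc_val q < real (base4_prefix C n) / 4 ^ n)"
    by (intro rel_ce_ex rel_ce_if_rel_decidable)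
  moreover have "(\<exists>n. qc_val q < real (base4_prefix C n) / 4 ^ n) \<longleftrightarrow> qc_val q < real_of_set C" for q
  proof
    assume "qc_val q < real_of_set C"
    then obtain n where "(1/4) ^ n < real_of_set C - qc_val q"
      using quarter_power_less[of "real_of_set C - qc_val q"] by auto
    moreover have "(1/4::real) ^ n / 3 < (1/4) ^ n"
      by simp
    ultimately have "qc_val q < real (base4_prefix C n) / 4 ^ n"
      using real_of_set_approx(2)[of C n] by linarith
    then show "\<exists>n. qc_val q < real (base4_prefix C n) / 4 ^ n"
      by blast
  qed (use real_of_set_approx(1) in \<open>fastforce intro: less_le_trans\<close>)
  ultimately show ?thesis
    unfolding lower_cut_ce_def by (rule rel_ce_cong)
qed

lemma upper_cut_ce_real_of_set: "upper_cut_ce (chi C) (real_of_set C)"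
proof -
  have "rel_decidable (chi C)
      (\<lambda>p. qc_val (qc_make (Suc (base4_prefix C (nsnd p))) 0 (4 ^ nsnd p)) < qc_val (nfst p))"
    by (intro rel_decidable_qc_val_less rel_computable_fst rel_computable_qc_make rel_computable_const
        rel_computable_Suc rel_computable_compose[OF rel_computable_base4_prefix]
        rel_computable_power rel_computable_snd)
  then have "rel_decidable (chi C)
      (\<lambda>p. real (base4_prefix C (nsnd p)) / 4 ^ nsnd p + (1/4) ^ nsnd p < qc_val (nfst p))"
    by (simp add: qc_val_make add_divide_distrib power_one_over add_ac)
  then have "rel_ce (chi C) (\<lambda>q. \<exists>n. real (base4_prefix C n) / 4 ^ n + (1/4) ^ n < qc_val q)"
    by (intro rel_ce_ex rel_ce_if_rel_decidable)
  moreover have "(\<exists>n. real (base4_prefix C n) / 4 ^ n + (1/4) ^ n < qc_val q) \<longleftrightarrow> real_of_set C < qc_val q"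
    for q
  proof
    assume "real_of_set C < qc_val q"
    then obtain n where "(1/4) ^ n < qc_val q - real_of_set C"
      using quarter_power_less[of "qc_val q - real_of_set C"] by auto
    then have "real (base4_prefix C n) / 4 ^ n + (1/4) ^ n < qc_val q"
      using real_of_set_approx(1)[of C n] by linarith
    then show "\<exists>n. real (base4_prefix C n) / 4 ^ n + (1/4) ^ n < qc_val q"
      by blast
  next
    assume "\<exists>n. real (base4_prefix C n) / 4 ^ n + (1/4) ^ n < qc_val q"
    then obtain n where "real (base4_prefix C n) / 4 ^ n + (1/4) ^ n < qc_val q"
      by blast
    moreover have "(1/4::real) ^ n / 3 < (1/4) ^ n"
      by simp
    ultimately show "real_of_set C < qc_val q"
      using real_of_set_approx(2)[of C n] by linarith
  qed
  ultimately show ?thesis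
    unfolding upper_cut_ce_def by (rule rel_ce_cong)
qed

lemma real_cut_real_of_set_turing_le: "real_cut (real_of_set C) \<le>\<^sub>T C"
  unfolding real_cut_turing_le_iff rel_computable_real_def
  using lower_cut_ce_real_of_set upper_cut_ce_real_of_set by blast

text \<open>Digit \<open>k\<close> is read off by comparing \<open>real_of_set C\<close> with a rational strictly between the two
  possible values of the first \<open>k + 1\<close> digits: with digits in \<open>{0, 1}\<close> and base 4, the
  remaining tail is at most a third of the last digit's weight.\<close>
lemma mem_iff_real_of_set_greater:
  "k \<in> C \<longleftrightarrow> real (base4_prefix C k) / 4 ^ k + (1/4) ^ k / 8 < real_of_set C"
proof -
  have prefix: "real (base4_prefix C (Suc k)) / 4 ^ Suc k
      = real (base4_prefix C k) / 4 ^ k + real (chi C k) * (1/4) ^ k / 4"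
    by (simp add: field_simps power_one_over)
  have "(0::real) < (1/4) ^ k"
    by simp
  show ?thesis
  proof (cases "k \<in> C")
    case True
    then have "real (base4_prefix C k) / 4 ^ k + (1/4) ^ k / 4 \<le> real_of_set C"
      using real_of_set_approx(1)[of C "Suc k"] unfolding prefix by (simp add: chi_def)
    with True \<open>0 < (1/4) ^ k\<close> show ?thesis
      by linarith
  next
    case False
    then have "real_of_set C \<le> real (base4_prefix C k) / 4 ^ k + (1/4) ^ k / 12"
      using real_of_set_approx(2)[of C "Suc k"] unfolding prefix by (simp add: chi_def)
    with False \<open>0 < (1/4) ^ k\<close> show ?thesis
      by linarith
  qed
qed

lemma turing_le_real_cut_real_of_set: "C \<le>\<^sub>T real_cut (real_of_set C)"
proof -
  let ?f = "chi (real_cut (real_of_set C))"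
  define digit_code where "digit_code r k = qc_make (8 * r + 1) 0 (8 * 4 ^ k)" for r k :: nat
  have digit: "?f (digit_code (base4_prefix C k) k) = chi C k" for k
    using mem_iff_real_of_set_greater[of k C]
    unfolding digit_code_def chi_def mem_real_cut_iff
    by (simp add: qc_val_make field_simps power_one_over)
  have computable_digit_code:
    "rel_computable ?f (\<lambda>n. digit_code (g n) (h n))" if "rel_computable ?f g" "rel_computable ?f h" for g h
    unfolding digit_code_def
    by (intro rel_computable_qc_make rel_computable_add rel_computable_mult rel_computable_power
        rel_computable_const that)
  have "rel_computable ?f (rec_nat 0 (\<lambda>k r. 4 * r + ?f (digit_code r k)))"
    by (intro rel_computable_rec_nat rel_computable_add rel_computable_mult rel_computable_const
        rel_computable_compose[OF rel_computable_oracle] computable_digit_code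
        rel_computable_fst rel_computable_snd)
  moreover have "rec_nat 0 (\<lambda>k r. 4 * r + ?f (digit_code r k)) = base4_prefix C"
  proof
    show "rec_nat 0 (\<lambda>k r. 4 * r + ?f (digit_code r k)) n = base4_prefix C n" for n
      by (induction n) (simp_all add: digit)
  qed
  ultimately have "rel_computable ?f (\<lambda>k. ?f (digit_code (base4_prefix C k) k))"
    by (intro rel_computable_compose[OF rel_computable_oracle] computable_digit_code rel_computable_id)
      simp
  then show ?thesis
    unfolding turing_le_iff_rel_computable digit .
qed

lemma real_deg_real_of_set: "real_deg (real_of_set C) = tdeg C"
  unfolding real_deg_def
  by (intro tdeg_eqI) (simp add: turing_eq_def real_cut_real_of_set_turing_le turing_le_real_cut_real_of_set)

text \<open>No carries occur, since the two sets occupy disjoint digit positions.\<close>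
lemma real_of_set_tjoin: "real_of_set (A \<oplus>\<^sub>T B) = real_of_set (A \<oplus>\<^sub>T {}) + real_of_set ({} \<oplus>\<^sub>T B)"
proof -
  have "real (chi (A \<oplus>\<^sub>T B) k) / 4 ^ Suc k
      = real (chi (A \<oplus>\<^sub>T {}) k) / 4 ^ Suc k + real (chi ({} \<oplus>\<^sub>T B) k) / 4 ^ Suc k" for k
    unfolding chi_tjoin by (simp add: chi_def add_divide_distrib)
  then show ?thesis
    unfolding real_of_set_def using suminf_add[OF summable_real_of_set summable_real_of_set] by simp
qed

section \<open>A field of reals yields an ideal of degrees\<close>

lemma degree_ideal_if_is_subfield:
  assumes "is_subfield (reals_of_degrees S)"
  shows "degree_ideal S"
proof -
  let ?K = "reals_of_degrees S"
  have mem: "real_of_set C \<in> ?K \<longleftrightarrow> tdeg C \<in> S" for C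
    by (simp add: reals_of_degrees_def real_deg_real_of_set)
  have add: "x + y \<in> ?K" if "x \<in> ?K" "y \<in> ?K" for x y
    using assms that unfolding is_subfield_def by blast
  have diff: "x - y \<in> ?K" if "x \<in> ?K" "y \<in> ?K" for x y
    using add[of x "- y"] assms that unfolding is_subfield_def by simp
  have left: "real_of_set (A \<oplus>\<^sub>T {}) \<in> ?K \<longleftrightarrow> tdeg A \<in> S" for A
    unfolding mem tdeg_eqI[OF turing_eq_tjoin_empty_right] ..
  have right: "real_of_set ({} \<oplus>\<^sub>T B) \<in> ?K \<longleftrightarrow> tdeg B \<in> S" for B
    unfolding mem tdeg_eqI[OF turing_eq_tjoin_empty_left] ..
  have "S \<noteq> {}"
    using assms unfolding is_subfield_def reals_of_degrees_def by blast
  moreover have "tdeg (A \<oplus>\<^sub>T B) \<in> S" if "tdeg A \<in> S" "tdeg B \<in> S" for A B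
  proof -
    have "real_of_set (A \<oplus>\<^sub>T {}) + real_of_set ({} \<oplus>\<^sub>T B) \<in> ?K"
      using add left right that by blast
    then show ?thesis
      unfolding real_of_set_tjoin[symmetric] mem .
  qed
  moreover have "tdeg B \<in> S" if "tdeg A \<in> S" "B \<le>\<^sub>T A" for A B
  proof -
    have "real_of_set (A \<oplus>\<^sub>T B) \<in> ?K"
      unfolding mem tdeg_eqI[OF turing_eq_tjoin_if_turing_le[OF that(2)]] by (rule that(1))
    then have "real_of_set (A \<oplus>\<^sub>T B) - real_of_set (A \<oplus>\<^sub>T {}) \<in> ?K"
      using diff left that(1) by blast
    then show ?thesis
      unfolding real_of_set_tjoin[of A B] right[symmetric] by simp
  qed
  ultimately show ?thesis
    unfolding degree_ideal_def by blast
qed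

theorem mainTheorem4:
  fixes S :: "nat set set set"
  assumes "S \<subseteq> turing_degrees"
  shows "is_subfield (reals_of_degrees S) \<longleftrightarrow> degree_ideal S"
  using degree_ideal_if_is_subfield is_subfield_reals_of_degrees assms by blast

end
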